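(* Let $m\in(1,2]$ and let $U\in C^3(\mathbb{R}^d)$ satisfy: there exists $A_1\ge0$ with $\|D^kU(q)\|\le A_1(\|q\|+1)^{m-k}$ for all $q$ and $k=2,3$; and there exist $A_3>0$, $A_4\in\mathbb{R}$ with $\langle\nabla U(q),q\rangle\ge A_3\|q\|^m-A_4$ for all $q$. Let $T\in\mathbb{N}^*$ and for $a>0$ let $V_a(q)=\exp(a\|q\|)$. Define $\tilde Q_{h,T}V_a(q)=(2\pi)^{-d/2}\int_{\mathbb{R}^d}V_a(\Phi^{q,T}_h(q,p))e^{-\|p\|^2/2}dp$. (a) If $m\in(1,2)$, then for all $h>0$ there exist $a>0$, $\lambda\in[0,1)$ and $b\ge0$ such that $\tilde Q_{h,T}V_a\le\lambda V_a+b$ on $\mathbb{R}^d$. (b) If $m=2$, there exists $h_0>0$ such that for all $h\in(0,h_0]$ there exist $a>0$, $\lambda\in[0,1)$, $b\ge0$ with $\tilde Q_{h,T}V_a\le\lambda V_a+b$ on $\mathbb{R}^d$.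
   Context: $D^kU$ is the $k$-th differential with operator norm. For $h>0$ the leapfrog map is $\Phi_h=\Psi^{(1)}_h\circ\Psi^{(2)}_h\circ\Psi^{(1)}_h$ with $\Psi^{(1)}_h(q,p)=(q,p-(h/2)\nabla U(q))$ and $\Psi^{(2)}_h(q,p)=(q+hp,p)$; $\Phi^{\circ T}_h$ is its $T$-fold composition and $\Phi^{q,T}_h$ the position component of $\Phi^{\circ T}_h$. *)

theory Defs
  imports "HOL-Analysis.Analysis"
begin

text \<open>Leapfrog integrator, parametrised by the gradient field gU of the potential U.\<close>

definition psi1 :: "('a::real_normed_vector \<Rightarrow> 'a) \<Rightarrow> real \<Rightarrow> 'a \<times> 'a \<Rightarrow> 'a \<times> 'a" where
  "psi1 gU h = (\<lambda>(q, p). (q, p - (h / 2) *\<^sub>R gU q))"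

definition psi2 :: "real \<Rightarrow> 'a::real_normed_vector \<times> 'a \<Rightarrow> 'a \<times> 'a" where
  "psi2 h = (\<lambda>(q, p). (q + h *\<^sub>R p, p))"

definition leapfrog :: "('a::real_normed_vector \<Rightarrow> 'a) \<Rightarrow> real \<Rightarrow> 'a \<times> 'a \<Rightarrow> 'a \<times> 'a" where
  "leapfrog gU h = psi1 gU h \<circ> psi2 h \<circ> psi1 gU h"

definition leapfrog_q :: "('a::real_normed_vector \<Rightarrow> 'a) \<Rightarrow> real \<Rightarrow> nat \<Rightarrow> 'a \<Rightarrow> 'a \<Rightarrow> 'a" where
  "leapfrog_q gU h T q p = fst ((leapfrog gU h ^^ T) (q, p))"

definition Vfun :: "real \<Rightarrow> 'a::real_normed_vector \<Rightarrow> real" where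
  "Vfun a q = exp (a * norm q)"

text \<open>The operator Q tilde applied to V_a, as an extended nonnegative real (the integral may diverge).\<close>
definition Qtilde_V :: "('a::euclidean_space \<Rightarrow> 'a) \<Rightarrow> real \<Rightarrow> nat \<Rightarrow> real \<Rightarrow> 'a \<Rightarrow> ennreal" where
  "Qtilde_V gU h T a q =
     ennreal ((2 * pi) powr (- real DIM('a) / 2)) *
     (\<integral>\<^sup>+ p. ennreal (Vfun a (leapfrog_q gU h T q p) * exp (- (norm p)\<^sup>2 / 2)) \<partial>lborel)"

end

theory Submission
  imports Defs "HOL-Probability.Probability" "HOL-Real_Asymp.Real_Asymp"
begin

text \<open>
  We take \<open>a = 1\<close>. With \<open>c = T\<^sup>2 h\<^sup>2 / 2\<close>, the position after \<open>T\<close> leapfrog steps stays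
  close to the free fall \<open>q + T h p - c \<nabla>U(q)\<close> under the constant force \<open>-\<nabla>U(q)\<close>, the error
  being controlled by the Lipschitz constant of \<open>\<nabla>U\<close> near \<open>q\<close>. The drift condition makes the
  gradient step contract: \<open>\<parallel>q - c \<nabla>U(q)\<parallel> \<le> \<parallel>q\<parallel> - (c A\<^sub>3/2) \<parallel>q\<parallel>\<^bsup>m-1\<^esup>\<close> for large \<open>q\<close>.
  For \<open>m < 2\<close> the Hessian bound decays, so the trajectory error is \<open>o(\<parallel>q\<parallel>\<^bsup>m-1\<^esup>)\<close> plus a term
  linear in \<open>p\<close> (large momenta are handled by the linear growth of the leapfrog map); for
  \<open>m = 2\<close> the error is a small multiple of \<open>\<parallel>q\<parallel>\<close> once \<open>h\<close> is small. Either way, for every \<open>C\<close>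
  the position is at most \<open>\<parallel>q\<parallel> - C + K \<parallel>p\<parallel>\<close> far out, and integrating \<open>exp (K \<parallel>p\<parallel>)\<close> against
  the Gaussian turns this into \<open>Q V \<le> V / 2\<close> there; on the remaining ball \<open>Q V\<close> is bounded.
\<close>

section \<open>Gaussian integrals\<close>

lemma nn_integral_exp_neg_square_quarter_finite:
  "(\<integral>\<^sup>+x. ennreal (exp (- x\<^sup>2 / 4)) \<partial>lborel) < \<infinity>"
proof -
  have "integrable lborel (\<lambda>x. sqrt (4 * pi) * normal_density 0 (sqrt 2) x)"
    by (intro integrable_mult_right) simp
  moreover have "sqrt (4 * pi) * normal_density 0 (sqrt 2) x = exp (- x\<^sup>2 / 4)" for x
    by (simp add: normal_density_def real_sqrt_mult)
  ultimately show ?thesis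
    using integrableD(2) by (simp add: less_top)
qed

lemma exp_norm_times_gaussian_le:
  fixes p :: "'a::real_normed_vector"
  shows "exp (K * norm p) * exp (- (norm p)\<^sup>2 / 2) \<le> exp (K\<^sup>2) * exp (- (norm p)\<^sup>2 / 4)"
proof -
  have "K * norm p - (norm p)\<^sup>2 / 2 \<le> K\<^sup>2 - (norm p)\<^sup>2 / 4"
    using zero_le_power2[of "norm p / 2 - K"] by (simp add: power2_eq_square algebra_simps)
  then show ?thesis
    by (simp add: mult_exp_exp)
qed

lemma exp_neg_norm_square_eq_prod:
  fixes p :: "'a::euclidean_space"
  shows "exp (- (norm p)\<^sup>2 / 4) = (\<Prod>b\<in>Basis. exp (- (p \<bullet> b)\<^sup>2 / 4))"
proof -
  have "(norm p)\<^sup>2 = (\<Sum>b\<in>Basis. (p \<bullet> b)\<^sup>2)"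
    unfolding power2_norm_eq_inner by (subst euclidean_inner) (simp add: power2_eq_square)
  then have "- (norm p)\<^sup>2 / 4 = (\<Sum>b\<in>Basis. - (p \<bullet> b)\<^sup>2 / 4)"
    by (simp add: sum_divide_distrib sum_negf)
  then show ?thesis
    by (simp add: exp_sum)
qed

lemma nn_integral_exp_norm_times_gaussian_finite:
  "(\<integral>\<^sup>+p. ennreal (exp (K * norm p) * exp (- (norm p)\<^sup>2 / 2)) \<partial>(lborel :: 'a::euclidean_space measure))
     < \<infinity>"
proof -
  have "(\<integral>\<^sup>+(p::'a). ennreal (exp (K * norm p) * exp (- (norm p)\<^sup>2 / 2)) \<partial>lborel)
      \<le> (\<integral>\<^sup>+(p::'a). ennreal (exp (K\<^sup>2)) * (\<Prod>b\<in>Basis. ennreal (exp (- (p \<bullet> b)\<^sup>2 / 4))) \<partial>lborel)"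
  proof (rule nn_integral_mono)
    fix p :: 'a
    have "ennreal (exp (K * norm p) * exp (- (norm p)\<^sup>2 / 2))
        \<le> ennreal (exp (K\<^sup>2) * exp (- (norm p)\<^sup>2 / 4))"
      by (rule ennreal_leI[OF exp_norm_times_gaussian_le])
    then show "ennreal (exp (K * norm p) * exp (- (norm p)\<^sup>2 / 2))
        \<le> ennreal (exp (K\<^sup>2)) * (\<Prod>b\<in>Basis. ennreal (exp (- (p \<bullet> b)\<^sup>2 / 4)))"
      unfolding exp_neg_norm_square_eq_prod[of p] by (simp add: ennreal_mult' prod_ennreal)
  qed
  also have "\<dots> = ennreal (exp (K\<^sup>2)) *
      (\<integral>\<^sup>+(p::'a). (\<Prod>b\<in>Basis. ennreal (exp (- (p \<bullet> b)\<^sup>2 / 4))) \<partial>lborel)"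
    by (rule nn_integral_cmult) measurable
  also have "(\<integral>\<^sup>+(p::'a). (\<Prod>b\<in>Basis. ennreal (exp (- (p \<bullet> b)\<^sup>2 / 4))) \<partial>lborel)
      = (\<Prod>b\<in>(Basis::'a set). (\<integral>\<^sup>+x. ennreal (exp (- x\<^sup>2 / 4)) \<partial>lborel))"
    by (rule nn_integral_lborel_prod) auto
  also have "ennreal (exp (K\<^sup>2)) * \<dots> < \<infinity>"
    using nn_integral_exp_neg_square_quarter_finite
    by (simp add: ennreal_mult_less_top power_less_top_ennreal)
  finally show ?thesis .
qed

section \<open>A drift condition from contraction far out\<close>

definition far_contracting :: "('a::real_normed_vector \<Rightarrow> 'a \<Rightarrow> 'a) \<Rightarrow> real \<Rightarrow> bool" where
  "far_contracting F K \<longleftrightarrow>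
     (\<forall>C. \<exists>R. \<forall>q p. R \<le> norm q \<longrightarrow> norm (F q p) \<le> norm q - C + K * norm p)"

lemma far_contracting_mono:
  assumes "far_contracting F K" and "K \<le> K'"
  shows "far_contracting F K'"
proof -
  have "K * norm p \<le> K' * norm p" for p :: 'a
    using assms(2) by (simp add: mult_right_mono)
  then show ?thesis
    using assms(1) unfolding far_contracting_def by (meson add_left_mono order.trans)
qed

lemma gaussian_integral_Vfun_le:
  fixes K :: real
  obtains M where "0 \<le> M"
    and "\<And>(F :: 'a::euclidean_space \<Rightarrow> 'a) E. (\<And>p. norm (F p) \<le> E + K * norm p) \<Longrightarrow>
      ennreal ((2 * pi) powr (- real DIM('a) / 2)) *
        (\<integral>\<^sup>+p. ennreal (Vfun 1 (F p) * exp (- (norm p)\<^sup>2 / 2)) \<partial>lborel) \<le> ennreal (exp E * M)"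
proof -
  define cd where "cd = (2 * pi) powr (- real DIM('a) / 2)"
  obtain M where M: "(\<integral>\<^sup>+(p::'a). ennreal (exp (K * norm p) * exp (- (norm p)\<^sup>2 / 2)) \<partial>lborel)
      = ennreal M" "0 \<le> M"
    using nn_integral_exp_norm_times_gaussian_finite[of K] by (auto simp: less_top_ennreal)
  have "ennreal cd * (\<integral>\<^sup>+p. ennreal (Vfun 1 (F p) * exp (- (norm p)\<^sup>2 / 2)) \<partial>lborel)
      \<le> ennreal (exp E * (cd * M))" if F: "\<And>p. norm (F p) \<le> E + K * norm p" for F :: "'a \<Rightarrow> 'a" and E
  proof -
    have "Vfun 1 (F p) * exp (- (norm p)\<^sup>2 / 2) \<le> exp E * (exp (K * norm p) * exp (- (norm p)\<^sup>2 / 2))"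
      for p
      using F[of p] by (simp add: Vfun_def mult.assoc flip: exp_add)
    then have "(\<integral>\<^sup>+p. ennreal (Vfun 1 (F p) * exp (- (norm p)\<^sup>2 / 2)) \<partial>lborel)
        \<le> (\<integral>\<^sup>+(p::'a). ennreal (exp E) * ennreal (exp (K * norm p) * exp (- (norm p)\<^sup>2 / 2)) \<partial>lborel)"
      by (intro nn_integral_mono) (simp add: ennreal_leI flip: ennreal_mult)
    also have "\<dots> = ennreal (exp E) * ennreal M"
      unfolding M(1)[symmetric] by (rule nn_integral_cmult) auto
    finally have "ennreal cd * (\<integral>\<^sup>+p. ennreal (Vfun 1 (F p) * exp (- (norm p)\<^sup>2 / 2)) \<partial>lborel)
        \<le> ennreal cd * (ennreal (exp E) * ennreal M)"
      by (rule mult_left_mono) simp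
    also have "\<dots> = ennreal (exp E * (cd * M))"
      using M(2) by (simp add: cd_def ennreal_mult ac_simps)
    finally show ?thesis .
  qed
  moreover have "0 \<le> cd * M"
    using M(2) by (simp add: cd_def)
  ultimately show ?thesis
    using that unfolding cd_def by blast
qed

lemma exp_norm_drift_condition:
  fixes F :: "'a::euclidean_space \<Rightarrow> 'a \<Rightarrow> 'a"
  assumes linear: "\<And>q p. norm (F q p) \<le> K0 * (norm q + norm p + 1)"
    and far: "far_contracting F K"
  shows "\<exists>lam b. 0 \<le> lam \<and> lam < 1 \<and> 0 \<le> b \<and>
    (\<forall>q. ennreal ((2 * pi) powr (- real DIM('a) / 2)) *
       (\<integral>\<^sup>+p. ennreal (Vfun 1 (F q p) * exp (- (norm p)\<^sup>2 / 2)) \<partial>lborel)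
       \<le> ennreal (lam * Vfun 1 q + b))"
proof -
  define K' where "K' = max K K0"
  have "0 \<le> K0"
    using order_trans[OF norm_ge_zero linear[of 0 0]] by simp
  then have K': "K0 \<le> K'"
    by (simp add: K'_def)
  obtain M where "0 \<le> M" and integral_le:
    "\<And>q E. (\<And>p. norm (F q p) \<le> E + K' * norm p) \<Longrightarrow>
      ennreal ((2 * pi) powr (- real DIM('a) / 2)) *
        (\<integral>\<^sup>+p. ennreal (Vfun 1 (F q p) * exp (- (norm p)\<^sup>2 / 2)) \<partial>lborel) \<le> ennreal (exp E * M)"
    by (rule gaussian_integral_Vfun_le[of K']) blast
  \<comment> \<open>chosen so that far out the kernel contracts \<open>V\<close> by the factor \<open>M e\<^sup>-\<^sup>C \<le> 1/2\<close>\<close>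
  define C where "C = ln (2 * M + 1)"
  have "exp (- C) = 1 / (2 * M + 1)"
    using \<open>0 \<le> M\<close> by (simp add: C_def exp_minus inverse_eq_divide add_nonneg_pos)
  then have "M * exp (- C) \<le> 1/2"
    using \<open>0 \<le> M\<close> by (simp add: divide_le_eq)
  obtain R where R: "\<And>q p. R \<le> norm q \<Longrightarrow> norm (F q p) \<le> norm q - C + K' * norm p"
    using far_contracting_mono[OF far, of K'] unfolding far_contracting_def K'_def by fastforce
  define b where "b = exp (K0 * (1 + \<bar>R\<bar>)) * M"
  have "0 \<le> b"
    using \<open>0 \<le> M\<close> by (simp add: b_def)
  have "exp (norm q - C) * M \<le> 1/2 * Vfun 1 q + b" for q
  proof -
    have "exp (norm q - C) * M = (M * exp (- C)) * Vfun 1 q"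
      by (simp add: Vfun_def exp_diff exp_minus field_simps)
    also have "\<dots> \<le> 1/2 * Vfun 1 q + b"
      using \<open>M * exp (- C) \<le> 1/2\<close> \<open>0 \<le> b\<close> by (intro add_increasing2 mult_right_mono) (auto simp: Vfun_def)
    finally show ?thesis .
  qed
  moreover have "norm (F q p) \<le> K0 * (1 + \<bar>R\<bar>) + K' * norm p" if "norm q < R" for q p
  proof -
    have "K0 * norm q \<le> K0 * \<bar>R\<bar>" "K0 * norm p \<le> K' * norm p"
      using that K' \<open>0 \<le> K0\<close> by (auto intro: mult_left_mono mult_right_mono)
    then show ?thesis
      using linear[of q p] by (simp add: algebra_simps)
  qed
  moreover have "b \<le> 1/2 * Vfun 1 q + b" for q
    by (simp add: Vfun_def)
  ultimately have "ennreal ((2 * pi) powr (- real DIM('a) / 2)) *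
      (\<integral>\<^sup>+p. ennreal (Vfun 1 (F q p) * exp (- (norm p)\<^sup>2 / 2)) \<partial>lborel) \<le> ennreal (1/2 * Vfun 1 q + b)"
    for q
    using integral_le[of q "norm q - C"] integral_le[of q "K0 * (1 + \<bar>R\<bar>)"] R[of q]
    by (cases "R \<le> norm q") (force simp: b_def intro: order.trans ennreal_leI)+
  then show ?thesis
    using \<open>0 \<le> b\<close> by (intro exI[of _ "1/2"] exI[of _ b]) auto
qed

section \<open>Linear growth of the leapfrog map\<close>

definition phase_size :: "'a::real_normed_vector \<times> 'a \<Rightarrow> real" where
  "phase_size z = norm (fst z) + norm (snd z) + 1"

lemma phase_size_psi1_le:
  assumes g: "\<And>x. norm (g x) \<le> B0 + A * norm x" and "0 \<le> h" "0 \<le> B0" "0 \<le> A"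
  shows "phase_size (psi1 g h z) \<le> (1 + h / 2 * (B0 + A)) * phase_size z"
proof (cases z)
  case (Pair q p)
  define N where "N = norm q + norm p + 1"
  have "B0 + A * norm q \<le> (B0 + A) * N"
    using assms by (simp add: N_def algebra_simps add_increasing mult_left_mono)
  then have "h / 2 * norm (g q) \<le> h / 2 * ((B0 + A) * N)"
    using g[of q] \<open>0 \<le> h\<close> by (intro mult_left_mono) auto
  moreover have "norm (p - (h / 2) *\<^sub>R g q) \<le> norm p + h / 2 * norm (g q)"
    using norm_triangle_ineq4[of p "(h / 2) *\<^sub>R g q"] \<open>0 \<le> h\<close> by simp
  moreover have "(1 + h / 2 * (B0 + A)) * N = N + h / 2 * ((B0 + A) * N)"
    by (simp add: algebra_simps)
  ultimately show ?thesis
    by (simp add: Pair psi1_def phase_size_def N_def)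
qed

lemma phase_size_psi2_le:
  assumes "0 \<le> h"
  shows "phase_size (psi2 h z) \<le> (1 + h) * phase_size z"
proof (cases z)
  case (Pair q p)
  have "norm (q + h *\<^sub>R p) \<le> norm q + h * norm p"
    using norm_triangle_ineq[of q "h *\<^sub>R p"] assms by simp
  moreover have "h * norm p \<le> h * phase_size z"
    using assms by (intro mult_left_mono) (auto simp: Pair phase_size_def)
  ultimately show ?thesis
    by (simp add: Pair psi2_def phase_size_def algebra_simps)
qed

lemma leapfrog_q_linear_growth:
  assumes g: "\<And>x. norm (g x) \<le> B0 + A * norm x" and "0 \<le> h" "0 \<le> B0" "0 \<le> A"
  shows "\<exists>K0. \<forall>q p. norm (leapfrog_q g h T q p) \<le> K0 * (norm q + norm p + 1)"
proof -
  define \<gamma> where "\<gamma> = (1 + h / 2 * (B0 + A))\<^sup>2 * (1 + h)"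
  have "0 \<le> 1 + h / 2 * (B0 + A)" "0 \<le> 1 + h"
    using assms by simp_all
  have step: "phase_size (leapfrog g h z) \<le> \<gamma> * phase_size z" for z
  proof -
    let ?a = "1 + h / 2 * (B0 + A)"
    have "phase_size (leapfrog g h z) \<le> ?a * phase_size (psi2 h (psi1 g h z))"
      using phase_size_psi1_le[OF assms] by (simp add: leapfrog_def)
    also have "\<dots> \<le> ?a * ((1 + h) * phase_size (psi1 g h z))"
      using phase_size_psi2_le[OF \<open>0 \<le> h\<close>] \<open>0 \<le> ?a\<close> by (rule mult_left_mono)
    also have "\<dots> \<le> ?a * ((1 + h) * (?a * phase_size z))"
      using phase_size_psi1_le[OF assms] \<open>0 \<le> ?a\<close> \<open>0 \<le> 1 + h\<close>
      by (intro mult_left_mono) auto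
    finally show ?thesis
      by (simp add: \<gamma>_def power2_eq_square ac_simps)
  qed
  have "0 \<le> \<gamma>"
    using \<open>0 \<le> 1 + h\<close> by (simp add: \<gamma>_def)
  have iterate: "phase_size ((leapfrog g h ^^ n) z) \<le> \<gamma> ^ n * phase_size z" for n z
  proof (induction n)
    case (Suc n)
    then show ?case
      using step[of "(leapfrog g h ^^ n) z"] mult_left_mono[OF Suc \<open>0 \<le> \<gamma>\<close>] by simp
  qed simp
  have "norm (leapfrog_q g h T q p) \<le> \<gamma> ^ T * (norm q + norm p + 1)" for q p
    using iterate[of T "(q, p)"] unfolding leapfrog_q_def phase_size_def
    by (smt (verit) fst_conv snd_conv norm_ge_zero)
  then show ?thesis
    by blast
qed

section \<open>Gradient estimates from the Hessian bound\<close>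

lemma lipschitz_of_derivative_bound:
  fixes g :: "'a::real_normed_vector \<Rightarrow> 'b::real_normed_vector"
  assumes "\<And>x. (g has_derivative blinfun_apply (D x)) (at x)"
    and "convex S" and "\<And>z. z \<in> S \<Longrightarrow> norm (D z) \<le> L" and "x \<in> S" "y \<in> S"
  shows "norm (g x - g y) \<le> L * norm (x - y)"
  by (rule differentiable_bound[OF assms(2) _ _ assms(4,5)])
     (auto intro: has_derivative_at_withinI[OF assms(1)] simp: assms(3) norm_blinfun.rep_eq[symmetric])

lemma norm_le_of_lipschitz:
  assumes "\<And>x y. norm (g x - g y) \<le> A * norm (x - y)"
  shows "norm (g x) \<le> norm (g 0) + A * norm x"
  using assms[of x 0] norm_triangle_ineq2[of "g x" "g 0"] by simp

lemma gradient_lipschitz: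
  fixes g :: "'a::real_normed_vector \<Rightarrow> 'a"
  assumes hess: "\<And>x. (g has_derivative blinfun_apply (D2 x)) (at x)"
    and bound2: "\<And>x. norm (D2 x) \<le> A1 * (norm x + 1) powr (m - 2)" and "m \<le> 2" "0 \<le> A1"
  shows "norm (g x - g y) \<le> A1 * norm (x - y)"
proof (rule lipschitz_of_derivative_bound[OF hess convex_UNIV])
  fix z :: 'a
  have "(norm z + 1) powr (m - 2) \<le> 1"
    using powr_mono2'[of "m - 2" 1 "norm z + 1"] assms(3) by simp
  then show "norm (D2 z) \<le> A1"
    using bound2[of z] mult_left_mono[of _ 1 A1] assms(4) by fastforce
qed auto

lemma gradient_lipschitz_near:
  fixes g :: "'a::real_normed_vector \<Rightarrow> 'a"
  assumes hess: "\<And>x. (g has_derivative blinfun_apply (D2 x)) (at x)"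
    and bound2: "\<And>x. norm (D2 x) \<le> A1 * (norm x + 1) powr (m - 2)" and "m \<le> 2" "0 \<le> A1"
    and x: "norm (x - q) \<le> norm q / 2"
  shows "norm (g x - g q) \<le> A1 * (norm q / 2 + 1) powr (m - 2) * norm (x - q)"
proof (rule lipschitz_of_derivative_bound[OF hess convex_cball])
  fix z assume "z \<in> cball q (norm q / 2)"
  then have "norm q / 2 \<le> norm z"
    using norm_triangle_ineq2[of q z] by (auto simp: dist_norm norm_minus_commute)
  then have "(norm z + 1) powr (m - 2) \<le> (norm q / 2 + 1) powr (m - 2)"
    using assms(3) by (intro powr_mono2') (auto intro: add_nonneg_pos)
  then show "norm (D2 z) \<le> A1 * (norm q / 2 + 1) powr (m - 2)"
    using bound2[of z] mult_left_mono[OF _ assms(4)] by fastforce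
qed (use x in \<open>auto simp: dist_norm norm_minus_commute\<close>)

lemma inner_along_ray_has_real_derivative:
  fixes g :: "'a::real_inner \<Rightarrow> 'a"
  assumes "\<And>x. (g has_derivative blinfun_apply (D x)) (at x)"
  shows "((\<lambda>t. g (t *\<^sub>R q) \<bullet> v) has_real_derivative (D (t *\<^sub>R q) q \<bullet> v)) (at t)"
proof -
  have "((\<lambda>t. g (t *\<^sub>R q)) has_derivative (\<lambda>s. D (t *\<^sub>R q) (s *\<^sub>R q))) (at t)"
    by (rule has_derivative_compose[OF _ assms]) (auto intro!: derivative_eq_intros)
  from has_derivative_inner_left[OF this, of v] show ?thesis
    by (simp add: has_field_derivative_def blinfun.scaleR_right mult_commute_abs)
qed

lemma inner_gradient_le:
  fixes g :: "'a::real_inner \<Rightarrow> 'a"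
  assumes hess: "\<And>x. (g has_derivative blinfun_apply (D2 x)) (at x)"
    and bound2: "\<And>x. norm (D2 x) \<le> A1 * (norm x + 1) powr (m - 2)" and "1 < m" "norm v \<le> 1"
  shows "g q \<bullet> v \<le> g 0 \<bullet> v + A1 / (m - 1) * ((norm q + 1) powr (m - 1) - 1)"
proof -
  define r where "r = norm q"
  define F where "F t = g (t *\<^sub>R q) \<bullet> v - A1 / (m - 1) * (t * r + 1) powr (m - 1)" for t
  have "F 1 \<le> F 0"
  proof (rule DERIV_nonpos_imp_nonincreasing[of 0 1 F])
    fix t :: real assume t: "0 \<le> t" "t \<le> 1"
    have "0 < t * r + 1"
      using t by (simp add: r_def add_nonneg_pos)
    then have "((\<lambda>t. A1 / (m - 1) * (t * r + 1) powr (m - 1)) has_real_derivative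
        A1 / (m - 1) * ((m - 1) * (t * r + 1) powr (m - 1 - 1) * r)) (at t)"
      by (auto intro!: derivative_eq_intros)
    moreover have "A1 / (m - 1) * ((m - 1) * (t * r + 1) powr (m - 1 - 1) * r)
        = A1 * (t * r + 1) powr (m - 2) * r"
      using \<open>1 < m\<close> by simp
    ultimately have power_deriv: "((\<lambda>t. A1 / (m - 1) * (t * r + 1) powr (m - 1)) has_real_derivative
        A1 * (t * r + 1) powr (m - 2) * r) (at t)"
      by simp
    have "D2 (t *\<^sub>R q) q \<bullet> v \<le> norm (D2 (t *\<^sub>R q)) * r"
      using norm_cauchy_schwarz[of "D2 (t *\<^sub>R q) q" v] norm_blinfun[of "D2 (t *\<^sub>R q)" q] \<open>norm v \<le> 1\<close>
      by (smt (verit, ccfv_SIG) mult_left_le norm_ge_zero r_def)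
    also have "\<dots> \<le> A1 * (t * r + 1) powr (m - 2) * r"
      using bound2[of "t *\<^sub>R q"] t by (simp add: r_def mult_right_mono)
    finally show "\<exists>y. (F has_real_derivative y) (at t) \<and> y \<le> 0"
      using DERIV_diff[OF inner_along_ray_has_real_derivative[OF hess] power_deriv]
      unfolding F_def by force
  qed simp
  then show ?thesis
    by (simp add: F_def r_def algebra_simps)
qed

lemma gradient_growth:
  fixes g :: "'a::real_inner \<Rightarrow> 'a"
  assumes hess: "\<And>x. (g has_derivative blinfun_apply (D2 x)) (at x)"
    and bound2: "\<And>x. norm (D2 x) \<le> A1 * (norm x + 1) powr (m - 2)" and "1 < m" "0 \<le> A1"
  shows "norm (g q) \<le> (norm (g 0) + A1 / (m - 1)) * (norm q + 1) powr (m - 1)"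
proof -
  define v where "v = sgn (g q)"
  have "norm v \<le> 1"
    by (simp add: v_def norm_sgn)
  have "norm (g q) = g q \<bullet> v"
    by (cases "g q = 0") (simp_all add: v_def sgn_div_norm dot_square_norm power2_eq_square)
  also have "\<dots> \<le> g 0 \<bullet> v + A1 / (m - 1) * ((norm q + 1) powr (m - 1) - 1)"
    using inner_gradient_le[OF hess bound2 \<open>1 < m\<close> \<open>norm v \<le> 1\<close>] .
  also have "g 0 \<bullet> v \<le> norm (g 0) * (norm q + 1) powr (m - 1)"
    using norm_cauchy_schwarz[of "g 0" v] \<open>norm v \<le> 1\<close> \<open>1 < m\<close>
    by (smt (verit) ge_one_powr_ge_zero mult_left_le mult_le_cancel_left1 norm_ge_zero)
  moreover have "0 \<le> A1 / (m - 1)"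
    using assms(3,4) by simp
  ultimately show ?thesis
    by (simp add: algebra_simps)
qed

section \<open>Deviation from free fall\<close>

lemma leapfrog_Pair:
  "leapfrog g h (q, p) = (q + h *\<^sub>R p - (h * h / 2) *\<^sub>R g q,
      p - (h / 2) *\<^sub>R (g q + g (q + h *\<^sub>R p - (h * h / 2) *\<^sub>R g q)))"
  by (simp add: leapfrog_def psi1_def psi2_def algebra_simps)

lemma leapfrog_fst_deviation:
  fixes g :: "'a::real_normed_vector \<Rightarrow> 'a" and k :: real
  assumes "0 \<le> h"
    and "norm (x - (q + (k * h) *\<^sub>R p - (k\<^sup>2 * h\<^sup>2 / 2) *\<^sub>R G)) \<le> k\<^sup>2 * h\<^sup>2 / 2 * \<delta>"
    and "norm (y - (p - (k * h) *\<^sub>R G)) \<le> k * h * \<delta>"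
    and "norm (g x - G) \<le> \<delta>"
  shows "norm (fst (leapfrog g h (x, y)) - (q + ((k + 1) * h) *\<^sub>R p - ((k + 1)\<^sup>2 * h\<^sup>2 / 2) *\<^sub>R G))
    \<le> (k + 1)\<^sup>2 * h\<^sup>2 / 2 * \<delta>"
proof -
  define e where "e = x - (q + (k * h) *\<^sub>R p - (k\<^sup>2 * h\<^sup>2 / 2) *\<^sub>R G)"
  define f where "f = y - (p - (k * h) *\<^sub>R G)"
  have "fst (leapfrog g h (x, y)) - (q + ((k + 1) * h) *\<^sub>R p - ((k + 1)\<^sup>2 * h\<^sup>2 / 2) *\<^sub>R G)
      = e + h *\<^sub>R f - (h * h / 2) *\<^sub>R (g x - G)"
    unfolding leapfrog_Pair e_def f_def
    by (simp add: algebra_simps power2_eq_square) (simp add: field_simps flip: scaleR_add_left)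
  then have "norm (fst (leapfrog g h (x, y)) - (q + ((k + 1) * h) *\<^sub>R p - ((k + 1)\<^sup>2 * h\<^sup>2 / 2) *\<^sub>R G))
      \<le> norm e + h * norm f + h * h / 2 * norm (g x - G)"
    using \<open>0 \<le> h\<close> norm_triangle_ineq4[of "e + h *\<^sub>R f" "(h * h / 2) *\<^sub>R (g x - G)"]
      norm_triangle_ineq[of e "h *\<^sub>R f"] by simp
  also have "\<dots> \<le> k\<^sup>2 * h\<^sup>2 / 2 * \<delta> + h * (k * h * \<delta>) + h * h / 2 * \<delta>"
    using assms unfolding e_def[symmetric] f_def[symmetric] by (intro add_mono mult_left_mono) auto
  also have "\<dots> = (k + 1)\<^sup>2 * h\<^sup>2 / 2 * \<delta>"
    by (simp add: algebra_simps power2_eq_square)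
  finally show ?thesis .
qed

lemma leapfrog_snd_deviation:
  fixes g :: "'a::real_normed_vector \<Rightarrow> 'a" and k :: real
  assumes "0 \<le> h"
    and "norm (y - (p - (k * h) *\<^sub>R G)) \<le> k * h * \<delta>"
    and "norm (g x - G) \<le> \<delta>" and "norm (g (fst (leapfrog g h (x, y))) - G) \<le> \<delta>"
  shows "norm (snd (leapfrog g h (x, y)) - (p - ((k + 1) * h) *\<^sub>R G)) \<le> (k + 1) * h * \<delta>"
proof -
  define f where "f = y - (p - (k * h) *\<^sub>R G)"
  define x' where "x' = fst (leapfrog g h (x, y))"
  have "snd (leapfrog g h (x, y)) - (p - ((k + 1) * h) *\<^sub>R G)
      = f - (h / 2) *\<^sub>R ((g x - G) + (g x' - G))"
    unfolding f_def x'_def leapfrog_Pair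
    by (simp add: algebra_simps) (simp flip: scaleR_add_left)
  then have "norm (snd (leapfrog g h (x, y)) - (p - ((k + 1) * h) *\<^sub>R G))
      \<le> norm f + h / 2 * (norm (g x - G) + norm (g x' - G))"
    using \<open>0 \<le> h\<close> norm_triangle_ineq4[of f "(h / 2) *\<^sub>R ((g x - G) + (g x' - G))"]
      mult_left_mono[OF norm_triangle_ineq[of "g x - G" "g x' - G"], of "h / 2"] by simp
  also have "\<dots> \<le> k * h * \<delta> + h / 2 * (\<delta> + \<delta>)"
    using assms unfolding f_def[symmetric] x'_def[symmetric] by (intro add_mono mult_left_mono) auto
  also have "\<dots> = (k + 1) * h * \<delta>"
    by (simp add: algebra_simps)
  finally show ?thesis .
qed

lemma norm_diff_le_of_free_fall_deviation:
  fixes x q p G :: "'a::real_normed_vector"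
  assumes "norm (x - (q + a *\<^sub>R p - b *\<^sub>R G)) \<le> b * \<delta>"
    and "0 \<le> a" "a \<le> A" "0 \<le> b" "b \<le> B" "0 \<le> \<delta>"
  shows "norm (x - q) \<le> A * norm p + B * norm G + B * \<delta>"
proof -
  have "norm (x - q) \<le> norm (a *\<^sub>R p - b *\<^sub>R G) + norm (x - (q + a *\<^sub>R p - b *\<^sub>R G))"
    using norm_triangle_ineq[of "a *\<^sub>R p - b *\<^sub>R G" "x - (q + a *\<^sub>R p - b *\<^sub>R G)"]
    by (simp add: algebra_simps)
  also have "\<dots> \<le> a * norm p + b * norm G + b * \<delta>"
    using norm_triangle_ineq4[of "a *\<^sub>R p" "b *\<^sub>R G"] assms by simp
  also have "\<dots> \<le> A * norm p + B * norm G + B * \<delta>"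
    using assms by (intro add_mono mult_right_mono) auto
  finally show ?thesis .
qed

text \<open>Within the ball of radius \<open>\<Sigma>\<close> around \<open>q\<close>, which all \<open>T\<close> positions stay in, the force
  deviates from the constant \<open>g q\<close> by at most \<open>L \<Sigma>\<close>, so the trajectory follows the free fall
  under the constant force up to errors of that order.\<close>
lemma leapfrog_q_free_fall_deviation:
  fixes g :: "'a::real_normed_vector \<Rightarrow> 'a" and h :: real and T :: nat and p q :: 'a
  defines "c \<equiv> (real T)\<^sup>2 * h\<^sup>2 / 2"
  defines "\<Sigma> \<equiv> 2 * (real T * h * norm p + c * norm (g q))"
  assumes "0 < h" "0 \<le> L" "c * L \<le> 1/2"
    and lip: "\<And>x. norm (x - q) \<le> \<Sigma> \<Longrightarrow> norm (g x - g q) \<le> L * norm (x - q)"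
  shows "norm (leapfrog_q g h T q p - (q + (real T * h) *\<^sub>R p - c *\<^sub>R g q)) \<le> c * L * \<Sigma>"
proof -
  define X where "X k = (leapfrog g h ^^ k) (q, p)" for k
  define G where "G = g q"
  define \<delta> where "\<delta> = L * \<Sigma>"
  have "0 \<le> \<Sigma>" "0 \<le> \<delta>"
    using assms(3,4) by (simp_all add: \<Sigma>_def c_def \<delta>_def)
  have force_dev: "norm (g x - G) \<le> \<delta>" if "norm (x - q) \<le> \<Sigma>" for x
    using lip[OF that] mult_left_mono[OF that \<open>0 \<le> L\<close>] by (simp add: G_def \<delta>_def)
  have inv: "norm (fst (X k) - q) \<le> \<Sigma> \<and>
      norm (fst (X k) - (q + (real k * h) *\<^sub>R p - ((real k)\<^sup>2 * h\<^sup>2 / 2) *\<^sub>R G))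
        \<le> (real k)\<^sup>2 * h\<^sup>2 / 2 * \<delta> \<and>
      norm (snd (X k) - (p - (real k * h) *\<^sub>R G)) \<le> real k * h * \<delta>" if "k \<le> T" for k
    using that
  proof (induction k)
    case 0
    then show ?case
      using \<open>0 \<le> \<Sigma>\<close> by (simp add: X_def)
  next
    case (Suc k)
    then have IH: "norm (fst (X k) - q) \<le> \<Sigma>"
      "norm (fst (X k) - (q + (real k * h) *\<^sub>R p - ((real k)\<^sup>2 * h\<^sup>2 / 2) *\<^sub>R G))
         \<le> (real k)\<^sup>2 * h\<^sup>2 / 2 * \<delta>"
      "norm (snd (X k) - (p - (real k * h) *\<^sub>R G)) \<le> real k * h * \<delta>"
      by auto
    have X_Suc: "X (Suc k) = leapfrog g h (fst (X k), snd (X k))"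
      by (simp add: X_def)
    have pos: "norm (fst (X (Suc k)) - (q + (real (Suc k) * h) *\<^sub>R p - ((real (Suc k))\<^sup>2 * h\<^sup>2 / 2) *\<^sub>R G))
        \<le> (real (Suc k))\<^sup>2 * h\<^sup>2 / 2 * \<delta>"
      using leapfrog_fst_deviation[where g=g and k="real k" and x="fst (X k)" and y="snd (X k)",
          OF less_imp_le[OF \<open>0 < h\<close>] IH(2,3) force_dev[OF IH(1)]] \<open>0 < h\<close>
      by (simp add: X_Suc add.commute)
    have "real (Suc k) * h \<le> real T * h" "(real (Suc k))\<^sup>2 * h\<^sup>2 / 2 \<le> c"
      using Suc.prems \<open>0 < h\<close> by (simp_all add: c_def power_mono mult_right_mono)
    from norm_diff_le_of_free_fall_deviation[OF pos _ this(1) _ this(2) \<open>0 \<le> \<delta>\<close>] \<open>0 < h\<close>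
    have "norm (fst (X (Suc k)) - q) \<le> real T * h * norm p + c * norm G + c * \<delta>"
      by simp
    moreover have "c * \<delta> \<le> \<Sigma> / 2"
      using mult_right_mono[OF \<open>c * L \<le> 1/2\<close> \<open>0 \<le> \<Sigma>\<close>] by (simp add: \<delta>_def mult.assoc)
    ultimately have near: "norm (fst (X (Suc k)) - q) \<le> \<Sigma>"
      by (simp add: \<Sigma>_def G_def)
    have "norm (snd (X (Suc k)) - (p - (real (Suc k) * h) *\<^sub>R G)) \<le> real (Suc k) * h * \<delta>"
      using leapfrog_snd_deviation[where g=g and k="real k" and x="fst (X k)" and y="snd (X k)",
          OF less_imp_le[OF \<open>0 < h\<close>] IH(3) force_dev[OF IH(1)]] force_dev[OF near] \<open>0 < h\<close>
      by (simp add: X_Suc add.commute)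
    with pos near show ?case
      by blast
  qed
  then show ?thesis
    using inv[of T] by (simp add: X_def G_def \<delta>_def leapfrog_q_def c_def mult.assoc)
qed

lemma norm_leapfrog_q_le:
  fixes g :: "'a::real_normed_vector \<Rightarrow> 'a" and h :: real and T :: nat and p q :: 'a
  defines "c \<equiv> (real T)\<^sup>2 * h\<^sup>2 / 2"
  assumes h: "0 < h" and L: "0 \<le> L" "c * L \<le> 1/2"
    and lip: "\<And>x. norm (x - q) \<le> 2 * (real T * h * norm p + c * norm (g q))
            \<Longrightarrow> norm (g x - g q) \<le> L * norm (x - q)"
  shows "norm (leapfrog_q g h T q p)
    \<le> norm (q - c *\<^sub>R g q) + real T * h * (1 + 2 * c * L) * norm p + 2 * c\<^sup>2 * L * norm (g q)"
proof -
  have "norm (leapfrog_q g h T q p) \<le> norm (q - c *\<^sub>R g q) + norm ((real T * h) *\<^sub>R p)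
      + norm (leapfrog_q g h T q p - (q + (real T * h) *\<^sub>R p - c *\<^sub>R g q))"
    using norm_triangle_ineq[of "q - c *\<^sub>R g q" "(real T * h) *\<^sub>R p"]
      norm_triangle_ineq[of "(q - c *\<^sub>R g q) + (real T * h) *\<^sub>R p"
        "leapfrog_q g h T q p - (q + (real T * h) *\<^sub>R p - c *\<^sub>R g q)"]
    by (simp add: algebra_simps)
  then show ?thesis
    using leapfrog_q_free_fall_deviation[where g=g and h=h and T=T and p=p and q=q and L=L] h L lip
    unfolding c_def by (simp add: power2_eq_square algebra_simps)
qed

section \<open>Subquadratic potentials\<close>

lemma norm_diff_scaleR_square:
  fixes q G :: "'a::real_inner"
  shows "(norm (q - c *\<^sub>R G))\<^sup>2 = (norm q)\<^sup>2 - 2 * c * (G \<bullet> q) + c\<^sup>2 * (norm G)\<^sup>2"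
  unfolding power2_norm_eq_inner
  by (simp add: inner_diff_left inner_diff_right inner_commute algebra_simps power2_eq_square)

lemma gradient_step_contracts_subquadratic:
  fixes g :: "'a::real_inner \<Rightarrow> 'a"
  assumes m: "1 < m" "m < 2" and "0 < c" "0 < A3" "0 \<le> B"
    and drift: "\<And>q. g q \<bullet> q \<ge> A3 * norm q powr m - A4"
    and growth: "\<And>q. norm (g q) \<le> B * (norm q + 1) powr (m - 1)"
  shows "\<exists>R. \<forall>q. R \<le> norm q \<longrightarrow> norm (q - c *\<^sub>R g q) \<le> norm q - c * A3 / 2 * norm q powr (m - 1)"
proof -
  \<comment> \<open>strictly positive constants, as \<open>real_asymp\<close> needs to know their signs\<close>
  define B' where "B' = B + 1"
  define A4' where "A4' = \<bar>A4\<bar> + 1"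
  have "0 < B'" "0 < A4'"
    using \<open>0 \<le> B\<close> by (simp_all add: B'_def A4'_def)
  have "eventually (\<lambda>r. 2 * c * A4' + c\<^sup>2 * B'\<^sup>2 * ((r + 1) powr (m - 1))\<^sup>2 \<le> c * A3 * r powr m
      \<and> c * A3 / 2 * r powr (m - 1) \<le> r \<and> 1 \<le> r) at_top"
    using m \<open>0 < c\<close> \<open>0 < A3\<close> \<open>0 < B'\<close> \<open>0 < A4'\<close> by (intro eventually_conj; real_asymp)
  then obtain R where R: "\<And>r. R \<le> r \<Longrightarrow>
      2 * c * A4' + c\<^sup>2 * B'\<^sup>2 * ((r + 1) powr (m - 1))\<^sup>2 \<le> c * A3 * r powr m
      \<and> c * A3 / 2 * r powr (m - 1) \<le> r \<and> 1 \<le> r"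
    unfolding eventually_at_top_linorder by blast
  have "norm (q - c *\<^sub>R g q) \<le> norm q - c * A3 / 2 * norm q powr (m - 1)" if "R \<le> norm q" for q
  proof (rule power2_le_imp_le)
    define r where "r = norm q"
    note Rr = R[OF that, folded r_def]
    show "0 \<le> norm q - c * A3 / 2 * norm q powr (m - 1)"
      using Rr by (simp add: r_def)
    have "norm (g q) \<le> B' * (r + 1) powr (m - 1)"
      using growth[of q] by (simp add: B'_def r_def distrib_right add_increasing2)
    then have "(norm (q - c *\<^sub>R g q))\<^sup>2 \<le> r\<^sup>2 - 2 * c * (A3 * r powr m - A4) + c\<^sup>2 * (B' * (r + 1) powr (m - 1))\<^sup>2"
      unfolding norm_diff_scaleR_square r_def
      using drift[of q] \<open>0 < c\<close> by (intro add_mono diff_mono mult_left_mono power_mono) auto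
    also have "\<dots> \<le> r\<^sup>2 - c * A3 * r powr m"
    proof -
      have "c * A4 \<le> c * A4'"
        using \<open>0 < c\<close> by (intro mult_left_mono) (auto simp: A4'_def)
      then show ?thesis
        using Rr by (simp add: power_mult_distrib algebra_simps)
    qed
    also have "\<dots> \<le> (r - c * A3 / 2 * r powr (m - 1))\<^sup>2"
    proof -
      have "r powr (m - 1) * r = r powr m"
        using Rr by (simp add: powr_mult_base mult.commute)
      then have "(r - c * A3 / 2 * r powr (m - 1))\<^sup>2
          = r\<^sup>2 - c * A3 * r powr m + (c * A3 / 2 * r powr (m - 1))\<^sup>2"
        by (simp add: power2_eq_square algebra_simps)
      then show ?thesis
        by simp
    qed
    finally show "(norm (q - c *\<^sub>R g q))\<^sup>2 \<le> (norm q - c * A3 / 2 * norm q powr (m - 1))\<^sup>2"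
      by (simp add: r_def)
  qed
  then show ?thesis
    by blast
qed

lemma far_contracting_of_small_momenta:
  assumes linear: "\<And>q p. norm (F q p) \<le> K0 * (norm q + norm p + 1)" and "0 < s"
    and small: "\<And>C. \<exists>R. \<forall>q p. R \<le> norm q \<longrightarrow> norm p \<le> norm q / s
                  \<longrightarrow> norm (F q p) \<le> norm q - C + K * norm p"
  shows "far_contracting F (max K (K0 * (s + 1) + 1))"
  unfolding far_contracting_def
proof
  fix C
  define K' where "K' = max K (K0 * (s + 1) + 1)"
  have "0 \<le> K0"
    using order_trans[OF norm_ge_zero linear[of 0 0]] by simp
  obtain R where R: "\<And>q p. R \<le> norm q \<Longrightarrow> norm p \<le> norm q / s
      \<Longrightarrow> norm (F q p) \<le> norm q - C + K * norm p"
    using small by blast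
  have "norm (F q p) \<le> norm q - C + K' * norm p" if q: "max R (s * (K0 + C)) \<le> norm q" for q p
  proof (cases "norm p \<le> norm q / s")
    case True
    have "K * norm p \<le> K' * norm p"
      by (simp add: K'_def mult_right_mono)
    then show ?thesis
      using R[OF _ True] q by fastforce
  next
    case False
    then have qp: "norm q \<le> s * norm p"
      using \<open>0 < s\<close> by (simp add: field_simps)
    then have "s * (K0 + C) \<le> s * norm p"
      using q by linarith
    then have "K0 + C \<le> norm p"
      using \<open>0 < s\<close> by simp
    have "K0 * norm q \<le> K0 * s * norm p"
      using mult_left_mono[OF qp \<open>0 \<le> K0\<close>] by (simp add: mult.assoc)
    moreover have "(K0 * (s + 1) + 1) * norm p \<le> K' * norm p"
      by (simp add: K'_def mult_right_mono)
    ultimately show ?thesis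
      using linear[of q p] \<open>K0 + C \<le> norm p\<close> norm_ge_zero[of q] by (simp add: algebra_simps; linarith)
  qed
  then show "\<exists>R. \<forall>q p. R \<le> norm q \<longrightarrow> norm (F q p) \<le> norm q - C + K' * norm p"
    by blast
qed

lemma norm_leapfrog_q_le_half_ball:
  fixes g :: "'a::real_normed_vector \<Rightarrow> 'a" and h m A1 :: real and T :: nat and q :: 'a
  defines "c \<equiv> (real T)\<^sup>2 * h\<^sup>2 / 2"
  defines "L \<equiv> A1 * (norm q / 2 + 1) powr (m - 2)"
  assumes hess: "\<And>x. (g has_derivative blinfun_apply (D2 x)) (at x)"
    and bound2: "\<And>x. norm (D2 x) \<le> A1 * (norm x + 1) powr (m - 2)"
    and "m \<le> 2" "0 \<le> A1" "0 < h" "c * L \<le> 1/2"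
    and "2 * (real T * h * norm p + c * norm (g q)) \<le> norm q / 2"
  shows "norm (leapfrog_q g h T q p)
    \<le> norm (q - c *\<^sub>R g q) + real T * h * (1 + 2 * c * L) * norm p + 2 * c\<^sup>2 * L * norm (g q)"
proof -
  have "norm (g x - g q) \<le> L * norm (x - q)"
    if "norm (x - q) \<le> 2 * (real T * h * norm p + c * norm (g q))" for x
    using gradient_lipschitz_near[OF hess bound2 \<open>m \<le> 2\<close> \<open>0 \<le> A1\<close>, of x q] that assms(9)
    by (simp add: L_def)
  moreover have "0 \<le> L"
    using \<open>0 \<le> A1\<close> by (simp add: L_def)
  ultimately show ?thesis
    using norm_leapfrog_q_le[OF \<open>0 < h\<close>] \<open>c * L \<le> 1/2\<close> unfolding c_def by blast
qed

lemma leapfrog_q_near_gradient_step_subquadratic: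
  fixes g :: "'a::real_inner \<Rightarrow> 'a" and h :: real and T :: nat
  defines "c \<equiv> (real T)\<^sup>2 * h\<^sup>2 / 2"
  assumes hess: "\<And>x. (g has_derivative blinfun_apply (D2 x)) (at x)"
    and bound2: "\<And>x. norm (D2 x) \<le> A1 * (norm x + 1) powr (m - 2)"
    and "m < 2" "0 \<le> A1"
    and growth: "\<And>q. norm (g q) \<le> B * (norm q + 1) powr (m - 1)" and "0 \<le> B"
    and "0 < h" "1 \<le> T" "0 < \<epsilon>"
  shows "\<exists>R. \<forall>q p. R \<le> norm q \<longrightarrow> norm p \<le> norm q / (8 * (real T * h)) \<longrightarrow>
    norm (leapfrog_q g h T q p)
      \<le> norm (q - c *\<^sub>R g q) + real T * h * (1 + 2 * c * A1) * norm p + \<epsilon> * norm q powr (m - 1)"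
proof -
  define A1' where "A1' = A1 + 1"
  define B' where "B' = B + 1"
  have "0 < c" "0 < real T * h" "0 < A1'" "0 < B'"
    using assms(5,7,8,9) by (simp_all add: c_def A1'_def B'_def)
  have "eventually (\<lambda>r. c * (A1' * (r / 2 + 1) powr (m - 2)) \<le> 1/2
      \<and> 2 * c * B' * (r + 1) powr (m - 1) \<le> r / 4
      \<and> 2 * c\<^sup>2 * A1' * B' * (r / 2 + 1) powr (m - 2) * (r + 1) powr (m - 1) \<le> \<epsilon> * r powr (m - 1))
      at_top"
    using \<open>m < 2\<close> \<open>0 < c\<close> \<open>0 < A1'\<close> \<open>0 < B'\<close> \<open>0 < \<epsilon>\<close> by (intro eventually_conj; real_asymp)
  then obtain R where R: "\<And>r. R \<le> r \<Longrightarrow> c * (A1' * (r / 2 + 1) powr (m - 2)) \<le> 1/2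
      \<and> 2 * c * B' * (r + 1) powr (m - 1) \<le> r / 4
      \<and> 2 * c\<^sup>2 * A1' * B' * (r / 2 + 1) powr (m - 2) * (r + 1) powr (m - 1) \<le> \<epsilon> * r powr (m - 1)"
    unfolding eventually_at_top_linorder by blast
  show ?thesis
  proof (intro exI[of _ R] allI impI)
    fix q p :: 'a assume "R \<le> norm q" and p: "norm p \<le> norm q / (8 * (real T * h))"
    define r where "r = norm q"
    note Rr = R[OF \<open>R \<le> norm q\<close>, folded r_def]
    define L where "L = A1 * (r / 2 + 1) powr (m - 2)"
    have "0 \<le> L" and L_le: "L \<le> A1' * (r / 2 + 1) powr (m - 2)"
      using \<open>0 \<le> A1\<close> by (simp_all add: L_def A1'_def distrib_right)
    have "L \<le> A1"
      using powr_mono2'[of "m - 2" 1 "r / 2 + 1"] mult_left_mono[of _ 1 A1] \<open>m < 2\<close> \<open>0 \<le> A1\<close>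
      by (simp add: L_def r_def)
    have gq: "norm (g q) \<le> B' * (r + 1) powr (m - 1)"
      using growth[of q] by (simp add: B'_def r_def distrib_right add_increasing2)
    have "real T * h * norm p \<le> real T * h * (norm q / (8 * (real T * h)))"
      using \<open>0 < real T * h\<close> by (intro mult_left_mono[OF p]) simp
    also have "\<dots> = r / 8"
      using \<open>0 < h\<close> \<open>1 \<le> T\<close> by (simp add: r_def)
    finally have "real T * h * norm p \<le> r / 8" .
    moreover have "c * norm (g q) \<le> r / 8"
      using mult_left_mono[OF gq less_imp_le[OF \<open>0 < c\<close>]] Rr by (simp add: algebra_simps)
    ultimately have "2 * (real T * h * norm p + c * norm (g q)) \<le> norm q / 2"
      by (simp add: r_def)
    moreover have "c * L \<le> 1/2"
      using Rr mult_left_mono[OF L_le, of c] \<open>0 < c\<close> by linarith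
    ultimately have "norm (leapfrog_q g h T q p)
        \<le> norm (q - c *\<^sub>R g q) + real T * h * (1 + 2 * c * L) * norm p + 2 * c\<^sup>2 * L * norm (g q)"
      using norm_leapfrog_q_le_half_ball[OF hess bound2 _ \<open>0 \<le> A1\<close> \<open>0 < h\<close>] \<open>m < 2\<close>
      unfolding c_def L_def r_def by simp
    moreover have "real T * h * (1 + 2 * c * L) * norm p \<le> real T * h * (1 + 2 * c * A1) * norm p"
      using \<open>0 < real T * h\<close> \<open>0 < c\<close> \<open>L \<le> A1\<close> by (intro mult_right_mono mult_left_mono) auto
    moreover have "2 * c\<^sup>2 * L * norm (g q)
        \<le> 2 * c\<^sup>2 * (A1' * (r / 2 + 1) powr (m - 2)) * (B' * (r + 1) powr (m - 1))"
      using \<open>0 \<le> L\<close> L_le gq by (intro mult_mono) auto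
    moreover have "2 * c\<^sup>2 * (A1' * (r / 2 + 1) powr (m - 2)) * (B' * (r + 1) powr (m - 1))
        \<le> \<epsilon> * norm q powr (m - 1)"
      using Rr by (simp add: r_def ac_simps)
    ultimately show "norm (leapfrog_q g h T q p)
        \<le> norm (q - c *\<^sub>R g q) + real T * h * (1 + 2 * c * A1) * norm p + \<epsilon> * norm q powr (m - 1)"
      by linarith
  qed
qed

lemma leapfrog_far_contracting_subquadratic:
  fixes g :: "'a::real_inner \<Rightarrow> 'a"
  assumes hess: "\<And>x. (g has_derivative blinfun_apply (D2 x)) (at x)"
    and bound2: "\<And>x. norm (D2 x) \<le> A1 * (norm x + 1) powr (m - 2)"
    and m: "1 < m" "m < 2" and "0 \<le> A1" "0 < A3"
    and drift: "\<And>q. g q \<bullet> q \<ge> A3 * norm q powr m - A4"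
    and "0 < h" "1 \<le> T"
  shows "\<exists>K. far_contracting (leapfrog_q g h T) K"
proof -
  define c where "c = (real T)\<^sup>2 * h\<^sup>2 / 2"
  define B where "B = norm (g 0) + A1 / (m - 1)"
  define K where "K = real T * h * (1 + 2 * c * A1)"
  have "0 < c" "0 \<le> B" "0 < 8 * (real T * h)"
    using assms(3,5,8,9) by (simp_all add: c_def B_def)
  have growth: "norm (g q) \<le> B * (norm q + 1) powr (m - 1)" for q
    unfolding B_def by (rule gradient_growth[OF hess bound2 m(1) \<open>0 \<le> A1\<close>])
  obtain R1 where R1: "\<And>q. R1 \<le> norm q
      \<Longrightarrow> norm (q - c *\<^sub>R g q) \<le> norm q - c * A3 / 2 * norm q powr (m - 1)"
    using gradient_step_contracts_subquadratic[OF m \<open>0 < c\<close> \<open>0 < A3\<close> \<open>0 \<le> B\<close> drift growth]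
    by blast
  obtain R2 where R2: "\<And>q p. R2 \<le> norm q \<Longrightarrow> norm p \<le> norm q / (8 * (real T * h)) \<Longrightarrow>
      norm (leapfrog_q g h T q p) \<le> norm (q - c *\<^sub>R g q) + K * norm p + c * A3 / 4 * norm q powr (m - 1)"
    using leapfrog_q_near_gradient_step_subquadratic[OF hess bound2 m(2) \<open>0 \<le> A1\<close> growth \<open>0 \<le> B\<close>
        \<open>0 < h\<close> \<open>1 \<le> T\<close>, of "c * A3 / 4"] \<open>0 < c\<close> \<open>0 < A3\<close>
    unfolding c_def K_def by auto
  have "norm (g x - g y) \<le> A1 * norm (x - y)" for x y
    using gradient_lipschitz[OF hess bound2 _ \<open>0 \<le> A1\<close>] m(2) by simp
  from leapfrog_q_linear_growth[OF norm_le_of_lipschitz[OF this] _ norm_ge_zero \<open>0 \<le> A1\<close>] \<open>0 < h\<close>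
  obtain K0 where K0: "\<And>q p. norm (leapfrog_q g h T q p) \<le> K0 * (norm q + norm p + 1)"
    by fastforce
  have "\<exists>R. \<forall>q p. R \<le> norm q \<longrightarrow> norm p \<le> norm q / (8 * (real T * h))
      \<longrightarrow> norm (leapfrog_q g h T q p) \<le> norm q - C + K * norm p" for C
  proof -
    have "eventually (\<lambda>r. C \<le> c * A3 / 4 * r powr (m - 1)) at_top"
      using m \<open>0 < c\<close> \<open>0 < A3\<close> by real_asymp
    then obtain R3 where R3: "\<And>r. R3 \<le> r \<Longrightarrow> C \<le> c * A3 / 4 * r powr (m - 1)"
      unfolding eventually_at_top_linorder by blast
    show ?thesis
    proof (intro exI[of _ "max R1 (max R2 R3)"] allI impI)
      fix q p :: 'a
      assume "max R1 (max R2 R3) \<le> norm q" and p: "norm p \<le> norm q / (8 * (real T * h))"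
      then have "R1 \<le> norm q" "R2 \<le> norm q" "R3 \<le> norm q"
        by auto
      then show "norm (leapfrog_q g h T q p) \<le> norm q - C + K * norm p"
        using R1[of q] R2[of q p] R3[of "norm q"] p by linarith
    qed
  qed
  from far_contracting_of_small_momenta[OF K0 \<open>0 < 8 * (real T * h)\<close> this] show ?thesis
    by blast
qed

section \<open>Quadratic potentials\<close>

lemma gradient_step_contracts_quadratic:
  fixes g :: "'a::real_inner \<Rightarrow> 'a"
  assumes drift: "\<And>q. g q \<bullet> q \<ge> A3 * (norm q)\<^sup>2 - A4"
    and growth: "\<And>q. norm (g q) \<le> B * (norm q + 1)"
    and "0 \<le> c" "c * B\<^sup>2 \<le> A3 / 2" "c * A3 \<le> 1"
  shows "norm (q - c *\<^sub>R g q) \<le> (1 - c * A3 / 2) * norm q + sqrt (2 * c * \<bar>A4\<bar> + 2 * c\<^sup>2 * B\<^sup>2)"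
proof (rule power2_le_imp_le)
  define r where "r = norm q"
  define D where "D = 2 * c * \<bar>A4\<bar> + 2 * c\<^sup>2 * B\<^sup>2"
  have "0 \<le> D" "0 \<le> (1 - c * A3 / 2) * r"
    using assms(3,5) by (simp_all add: D_def r_def)
  then show "0 \<le> (1 - c * A3 / 2) * norm q + sqrt (2 * c * \<bar>A4\<bar> + 2 * c\<^sup>2 * B\<^sup>2)"
    by (simp add: D_def r_def)
  have "(norm (q - c *\<^sub>R g q))\<^sup>2 \<le> r\<^sup>2 - 2 * c * (A3 * r\<^sup>2 - A4) + c\<^sup>2 * (B * (r + 1))\<^sup>2"
    unfolding norm_diff_scaleR_square r_def
    using drift[of q] growth[of q] \<open>0 \<le> c\<close> by (intro add_mono diff_mono mult_left_mono power_mono) auto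
  also have "\<dots> \<le> (1 - c * A3) * r\<^sup>2 + D"
  proof -
    have "(r + 1)\<^sup>2 \<le> 2 * r\<^sup>2 + 2"
      using zero_le_power2[of "r - 1"] by (simp add: power2_eq_square algebra_simps)
    from mult_left_mono[OF this, of "c\<^sup>2 * B\<^sup>2"]
    have "c\<^sup>2 * (B * (r + 1))\<^sup>2 \<le> c\<^sup>2 * B\<^sup>2 * (2 * r\<^sup>2 + 2)"
      by (simp add: power_mult_distrib mult.assoc)
    also have "\<dots> = 2 * c * (c * B\<^sup>2) * r\<^sup>2 + 2 * c\<^sup>2 * B\<^sup>2"
      by (simp add: power2_eq_square algebra_simps)
    also have "\<dots> \<le> 2 * c * (A3 / 2) * r\<^sup>2 + 2 * c\<^sup>2 * B\<^sup>2"
      using assms(3,4) by (intro add_mono mult_right_mono mult_left_mono) auto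
    finally have "c\<^sup>2 * (B * (r + 1))\<^sup>2 \<le> c * A3 * r\<^sup>2 + 2 * c\<^sup>2 * B\<^sup>2"
      by simp
    moreover have "2 * c * A4 \<le> 2 * c * \<bar>A4\<bar>"
      using \<open>0 \<le> c\<close> by (intro mult_left_mono) auto
    ultimately show ?thesis
      by (simp add: D_def algebra_simps)
  qed
  also have "\<dots> \<le> ((1 - c * A3 / 2) * r + sqrt D)\<^sup>2"
  proof -
    have "((1 - c * A3 / 2) * r + sqrt D)\<^sup>2
        = (1 - c * A3) * r\<^sup>2 + (c * A3 / 2 * r)\<^sup>2 + 2 * ((1 - c * A3 / 2) * r) * sqrt D + D"
      using \<open>0 \<le> D\<close> by (simp add: power2_eq_square algebra_simps)
    then show ?thesis
      using \<open>0 \<le> D\<close> \<open>0 \<le> (1 - c * A3 / 2) * r\<close> zero_le_power2[of "c * A3 / 2 * r"] by simp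
  qed
  finally show "(norm (q - c *\<^sub>R g q))\<^sup>2
      \<le> ((1 - c * A3 / 2) * norm q + sqrt (2 * c * \<bar>A4\<bar> + 2 * c\<^sup>2 * B\<^sup>2))\<^sup>2"
    by (simp add: D_def r_def)
qed

lemma leapfrog_far_contracting_quadratic:
  fixes g :: "'a::real_inner \<Rightarrow> 'a" and h :: real and T :: nat
  defines "c \<equiv> (real T)\<^sup>2 * h\<^sup>2 / 2"
  assumes lip: "\<And>x y. norm (g x - g y) \<le> A1 * norm (x - y)" and "0 \<le> A1" "0 < A3"
    and drift: "\<And>q. g q \<bullet> q \<ge> A3 * (norm q)\<^sup>2 - A4"
    and growth: "\<And>q. norm (g q) \<le> B * (norm q + 1)" and "0 \<le> B"
    and "0 < h" "1 \<le> T"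
    and small: "c * A1 \<le> 1/2" "c * B\<^sup>2 \<le> A3 / 2" "c * A3 \<le> 1" "c * (2 * A1 * B) \<le> A3 / 4"
  shows "far_contracting (leapfrog_q g h T) (real T * h * (1 + 2 * c * A1))"
proof -
  define E where "E = sqrt (2 * c * \<bar>A4\<bar> + 2 * c\<^sup>2 * B\<^sup>2) + c * A3 / 4"
  have "0 < c"
    using \<open>0 < h\<close> \<open>1 \<le> T\<close> by (simp add: c_def)
  have bound: "norm (leapfrog_q g h T q p)
      \<le> norm q - c * A3 / 4 * norm q + E + real T * h * (1 + 2 * c * A1) * norm p" for q p
  proof -
    have "norm (leapfrog_q g h T q p)
        \<le> norm (q - c *\<^sub>R g q) + real T * h * (1 + 2 * c * A1) * norm p + 2 * c\<^sup>2 * A1 * norm (g q)"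
      using norm_leapfrog_q_le[OF \<open>0 < h\<close> \<open>0 \<le> A1\<close>] small(1) lip unfolding c_def by blast
    moreover have "2 * c\<^sup>2 * A1 * norm (g q) \<le> c * (A3 / 4) * (norm q + 1)"
    proof -
      have "2 * c\<^sup>2 * A1 * norm (g q) \<le> c * (c * (2 * A1 * B)) * (norm q + 1)"
        using mult_left_mono[OF growth[of q], of "2 * c\<^sup>2 * A1"] \<open>0 < c\<close> \<open>0 \<le> A1\<close>
        by (simp add: power2_eq_square ac_simps)
      also have "\<dots> \<le> c * (A3 / 4) * (norm q + 1)"
        using \<open>0 < c\<close> small(4) by (intro mult_right_mono mult_left_mono) auto
      finally show ?thesis .
    qed
    ultimately show ?thesis
      using gradient_step_contracts_quadratic[OF drift growth _ small(2,3), of q] \<open>0 < c\<close>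
      by (simp add: E_def algebra_simps)
  qed
  show ?thesis
    unfolding far_contracting_def
  proof
    fix C
    have "norm (leapfrog_q g h T q p) \<le> norm q - C + real T * h * (1 + 2 * c * A1) * norm p"
      if "4 * (C + E) / (c * A3) \<le> norm q" for q p
    proof -
      have "C + E \<le> c * A3 / 4 * norm q"
        using that \<open>0 < c\<close> \<open>0 < A3\<close> by (simp add: divide_le_eq algebra_simps)
      then show ?thesis
        using bound[of q p] by linarith
    qed
    then show "\<exists>R. \<forall>q p. R \<le> norm q
        \<longrightarrow> norm (leapfrog_q g h T q p) \<le> norm q - C + real T * h * (1 + 2 * c * A1) * norm p"
      by blast
  qed
qed

lemma eventually_leapfrog_far_contracting_quadratic:
  fixes g :: "'a::real_inner \<Rightarrow> 'a"
  assumes lip: "\<And>x y. norm (g x - g y) \<le> A1 * norm (x - y)" and "0 \<le> A1" "0 < A3"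
    and drift: "\<And>q. g q \<bullet> q \<ge> A3 * (norm q)\<^sup>2 - A4"
    and growth: "\<And>q. norm (g q) \<le> B * (norm q + 1)" and "0 \<le> B" and "1 \<le> T"
  shows "\<forall>\<^sub>F h in at_right 0. \<exists>K. far_contracting (leapfrog_q g h T) K"
proof -
  have small: "\<forall>\<^sub>F h in at_right 0. (real T)\<^sup>2 * h\<^sup>2 / 2 * X \<le> Y" if "0 < Y" for X Y :: real
  proof -
    have "((\<lambda>h. (real T)\<^sup>2 * h\<^sup>2 / 2 * X) \<longlongrightarrow> 0) (at_right 0)"
      by (intro tendsto_eq_intros) auto
    from order_tendstoD(2)[OF this that] show ?thesis
      by (rule eventually_mono) simp
  qed
  have "\<forall>\<^sub>F h in at_right 0. 0 < h \<and> (real T)\<^sup>2 * h\<^sup>2 / 2 * A1 \<le> 1/2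
      \<and> (real T)\<^sup>2 * h\<^sup>2 / 2 * B\<^sup>2 \<le> A3 / 2 \<and> (real T)\<^sup>2 * h\<^sup>2 / 2 * A3 \<le> 1
      \<and> (real T)\<^sup>2 * h\<^sup>2 / 2 * (2 * A1 * B) \<le> A3 / 4"
    using \<open>0 < A3\<close> by (intro eventually_conj eventually_at_right_less small) auto
  then show ?thesis
    using leapfrog_far_contracting_quadratic[OF lip \<open>0 \<le> A1\<close> \<open>0 < A3\<close> drift growth \<open>0 \<le> B\<close>
        _ \<open>1 \<le> T\<close>]
    by (elim eventually_mono) blast
qed

lemma Qtilde_V_drift_condition:
  fixes gU :: "'a::euclidean_space \<Rightarrow> 'a"
  assumes "\<And>x. norm (gU x) \<le> B0 + A * norm x" "0 \<le> h" "0 \<le> B0" "0 \<le> A"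
    and "far_contracting (leapfrog_q gU h T) K"
  shows "\<exists>a>0. \<exists>lam b. 0 \<le> lam \<and> lam < 1 \<and> 0 \<le> b \<and>
    (\<forall>q. Qtilde_V gU h T a q \<le> ennreal (lam * Vfun a q + b))"
proof -
  obtain K0 where "\<And>q p. norm (leapfrog_q gU h T q p) \<le> K0 * (norm q + norm p + 1)"
    using leapfrog_q_linear_growth[OF assms(1-4)] by blast
  from exp_norm_drift_condition[OF this assms(5)] show ?thesis
    unfolding Qtilde_V_def by (intro exI[of _ 1]) auto
qed

lemma Qtilde_V_drift_condition_subquadratic:
  fixes gU :: "'a::euclidean_space \<Rightarrow> 'a"
  assumes hess: "\<And>x. (gU has_derivative blinfun_apply (D2 x)) (at x)"
    and bound2: "\<And>x. norm (D2 x) \<le> A1 * (norm x + 1) powr (m - 2)"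
    and "1 < m" "m < 2" "0 \<le> A1" "0 < A3"
    and drift: "\<And>q. gU q \<bullet> q \<ge> A3 * norm q powr m - A4"
    and "0 < h" "1 \<le> T"
  shows "\<exists>a>0. \<exists>lam b. 0 \<le> lam \<and> lam < 1 \<and> 0 \<le> b \<and>
    (\<forall>q. Qtilde_V gU h T a q \<le> ennreal (lam * Vfun a q + b))"
proof -
  have "norm (gU x - gU y) \<le> A1 * norm (x - y)" for x y
    using gradient_lipschitz[OF hess bound2 _ \<open>0 \<le> A1\<close>] \<open>m < 2\<close> by simp
  note linear = norm_le_of_lipschitz[OF this]
  obtain K where "far_contracting (leapfrog_q gU h T) K"
    using leapfrog_far_contracting_subquadratic[OF hess bound2 assms(3-6) drift assms(8,9)] by blast
  from Qtilde_V_drift_condition[OF linear _ norm_ge_zero \<open>0 \<le> A1\<close> this] \<open>0 < h\<close>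
  show ?thesis
    by simp
qed

lemma Qtilde_V_drift_condition_quadratic:
  fixes gU :: "'a::euclidean_space \<Rightarrow> 'a"
  assumes lip: "\<And>x y. norm (gU x - gU y) \<le> A1 * norm (x - y)" and "0 \<le> A1" "0 < A3"
    and drift: "\<And>q. gU q \<bullet> q \<ge> A3 * (norm q)\<^sup>2 - A4" and "1 \<le> T"
  shows "\<exists>h0>0. \<forall>h. 0 < h \<and> h \<le> h0 \<longrightarrow>
    (\<exists>a>0. \<exists>lam b. 0 \<le> lam \<and> lam < 1 \<and> 0 \<le> b \<and>
       (\<forall>q. Qtilde_V gU h T a q \<le> ennreal (lam * Vfun a q + b)))"
proof -
  note linear = norm_le_of_lipschitz[OF lip]
  have "norm (gU q) \<le> (norm (gU 0) + A1) * (norm q + 1)" for q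
  proof -
    have "(norm (gU 0) + A1) * (norm q + 1) = norm (gU 0) + A1 * norm q + (A1 + norm q * norm (gU 0))"
      by (simp add: algebra_simps)
    moreover have "0 \<le> norm q * norm (gU 0)"
      by simp
    ultimately show ?thesis
      using linear[of q] \<open>0 \<le> A1\<close> by linarith
  qed
  moreover have "0 \<le> norm (gU 0) + A1"
    using \<open>0 \<le> A1\<close> by simp
  ultimately have "\<forall>\<^sub>F h in at_right 0. \<exists>K. far_contracting (leapfrog_q gU h T) K"
    by (rule eventually_leapfrog_far_contracting_quadratic[OF lip \<open>0 \<le> A1\<close> \<open>0 < A3\<close> drift _ _ \<open>1 \<le> T\<close>])
  then obtain b where "0 < b"
    and far: "\<And>h. 0 < h \<Longrightarrow> h < b \<Longrightarrow> \<exists>K. far_contracting (leapfrog_q gU h T) K"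
    unfolding eventually_at_right_field by auto
  show ?thesis
  proof (rule exI[of _ "b / 2"], intro conjI allI impI)
    fix h :: real assume h: "0 < h \<and> h \<le> b / 2"
    then obtain K where "far_contracting (leapfrog_q gU h T) K"
      using far[of h] \<open>0 < b\<close> by auto
    from Qtilde_V_drift_condition[OF linear _ norm_ge_zero \<open>0 \<le> A1\<close> this] h
    show "\<exists>a>0. \<exists>lam b. 0 \<le> lam \<and> lam < 1 \<and> 0 \<le> b \<and>
        (\<forall>q. Qtilde_V gU h T a q \<le> ennreal (lam * Vfun a q + b))"
      by simp
  qed (use \<open>0 < b\<close> in simp)
qed

theorem proposition7:
  fixes U :: "'a::euclidean_space \<Rightarrow> real"
    and gU :: "'a \<Rightarrow> 'a"
    and D2 :: "'a \<Rightarrow> ('a \<Rightarrow>\<^sub>L 'a)"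
    and D3 :: "'a \<Rightarrow> ('a \<Rightarrow>\<^sub>L ('a \<Rightarrow>\<^sub>L 'a))"
    and m A1 A3 A4 :: real and T :: nat
  assumes grad: "\<And>q. (U has_derivative (\<lambda>v. gU q \<bullet> v)) (at q)"
    and hess: "\<And>q. (gU has_derivative blinfun_apply (D2 q)) (at q)"
    and third: "\<And>q. (D2 has_derivative blinfun_apply (D3 q)) (at q)"
    and D3_cont: "continuous_on UNIV D3"
    and m: "1 < m" "m \<le> 2"
    and A1: "A1 \<ge> 0"
    and bound2: "\<And>q. norm (D2 q) \<le> A1 * (norm q + 1) powr (m - 2)"
    and bound3: "\<And>q. norm (D3 q) \<le> A1 * (norm q + 1) powr (m - 3)"
    and A3: "A3 > 0"
    and drift: "\<And>q. gU q \<bullet> q \<ge> A3 * norm q powr m - A4"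
    and T: "T \<ge> 1"
  shows "(m < 2 \<longrightarrow>
            (\<forall>h>0. \<exists>a>0. \<exists>lam b. 0 \<le> lam \<and> lam < 1 \<and> 0 \<le> b \<and>
               (\<forall>q. Qtilde_V gU h T a q \<le> ennreal (lam * Vfun a q + b))))
       \<and> (m = 2 \<longrightarrow>
            (\<exists>h0>0. \<forall>h. 0 < h \<and> h \<le> h0 \<longrightarrow>
               (\<exists>a>0. \<exists>lam b. 0 \<le> lam \<and> lam < 1 \<and> 0 \<le> b \<and>
                  (\<forall>q. Qtilde_V gU h T a q \<le> ennreal (lam * Vfun a q + b)))))"
proof -
  have lip: "norm (gU x - gU y) \<le> A1 * norm (x - y)" for x y
    using gradient_lipschitz[OF hess bound2 m(2) A1] .
  have "A3 * (norm q)\<^sup>2 - A4 \<le> gU q \<bullet> q" if "m = 2" for q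
    using drift[of q] that by (simp add: powr_numeral)
  then show ?thesis
    using Qtilde_V_drift_condition_subquadratic[OF hess bound2 m(1) _ A1 A3 drift _ T]
      Qtilde_V_drift_condition_quadratic[OF lip A1 A3 _ T]
    by blast
qed

end
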